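(* Let $K$ be a compact line, $Q\subseteq K$ and $(F_i)_{i\in I}$ a weak*-null family in $\mathrm{NBV}(K)$ which is of type $c_0\ell_1$ over $Q$. Then the set $\{t\in Q\cap(H\setminus H^+):(F_i(t))_{i\in I}\notin c_0(I)\}$ is countable for every closed separable subset $H$ of $K$, and moreover the set $\{t\in Q\cap H:(F_i(t))_{i\in I}\notin c_0(I)\}$ is countable for every closed separable convex subset $H$ of $K$.
   Context: A compact line is a totally ordered set which is compact in its order topology; a closed subset $H$ is a compact line with the induced order, and $H^+$ denotes its right-isolated points ($\max H$ or points having an immediate successor in $H$). A subset $H$ is convex if $t\le s$ in $H$ implies $[t,s]\subseteq H$. $\mathrm{NBV}(K)$ is the space of right-continuous real maps of bounded variation on $K$, identified with $C(K)^*$ via $F_\mu(t)=\mu([\min K,t])$. $\lim_{i\in I}a_i=0$ means $\{i:|a_i|\ge\varepsilon\}$ is finite for every $\varepsilon>0$; $c_0(I)$ is the set of such families. $(F_i)$ is weak*-null if $\lim_{i\in I}\int f\,d\mu_i=0$ for every $f\in C(K)$, $\mu_i$ associated to $F_i$. $(F_i)$ is of type $c_0\ell_1$ over $Q$ if $F_i(t)=a_{i,t}+b_{i,t}$ ($i\in I,t\in Q$) with $\lim_{i\in I}a_{i,t}=0$ for each $t\in Q$ and $\sup_i\sum_{t\in Q}|b_{i,t}|<\infty$. *)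

theory Defs
  imports "HOL-Analysis.Analysis"
begin

text \<open>A compact line is modelled as a type of class linorder_topology (order topology)
  whose universe is compact.\<close>

definition compact_line_type :: "'a::linorder_topology itself \<Rightarrow> bool" where
  "compact_line_type _ \<longleftrightarrow> compact (UNIV :: 'a set)"

definition right_isolated :: "'a::linorder set \<Rightarrow> 'a set" where
  "right_isolated H = {t \<in> H. (\<forall>s\<in>H. s \<le> t) \<or> (\<exists>s\<in>H. t < s \<and> (\<forall>u\<in>H. \<not> (t < u \<and> u < s)))}"

definition order_convex :: "'a::linorder set \<Rightarrow> bool" where
  "order_convex H \<longleftrightarrow> (\<forall>t\<in>H. \<forall>s\<in>H. t \<le> s \<longrightarrow> {t..s} \<subseteq> H)"

text \<open>lim_{i in I} a_i = 0 in the sense of the paper (membership in c_0(I)).\<close>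
definition c0_on :: "'i set \<Rightarrow> ('i \<Rightarrow> real) \<Rightarrow> bool" where
  "c0_on I a \<longleftrightarrow> (\<forall>\<epsilon>>0. finite {i\<in>I. \<epsilon> \<le> \<bar>a i\<bar>})"

definition finite_radon :: "'a::topological_space measure \<Rightarrow> bool" where
  "finite_radon M \<longleftrightarrow> sets M = sets borel \<and> emeasure M UNIV < \<infinity> \<and>
     (\<forall>A\<in>sets borel. emeasure M A = (SUP C\<in>{C. compact C \<and> C \<subseteq> A}. emeasure M C))"

text \<open>The signed Radon measure mu = Mp - Mm is associated with F : K -> R, i.e.
  F(t) = mu([min K, t]).\<close>
definition associated_measure :: "('a::linorder_topology \<Rightarrow> real) \<Rightarrow> 'a measure \<Rightarrow> 'a measure \<Rightarrow> bool" where
  "associated_measure F Mp Mm \<longleftrightarrow> finite_radon Mp \<and> finite_radon Mm \<and>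
     (\<forall>t. F t = measure Mp {..t} - measure Mm {..t})"

definition weak_star_null ::
  "'i set \<Rightarrow> ('i \<Rightarrow> 'a::linorder_topology \<Rightarrow> real) \<Rightarrow> ('i \<Rightarrow> 'a measure) \<Rightarrow> ('i \<Rightarrow> 'a measure) \<Rightarrow> bool" where
  "weak_star_null I F Mp Mm \<longleftrightarrow> (\<forall>i\<in>I. associated_measure (F i) (Mp i) (Mm i)) \<and>
     (\<forall>f::'a \<Rightarrow> real. continuous_on UNIV f \<longrightarrow>
        c0_on I (\<lambda>i. integral\<^sup>L (Mp i) f - integral\<^sup>L (Mm i) f))"

definition type_c0l1 :: "'i set \<Rightarrow> ('i \<Rightarrow> 'a \<Rightarrow> real) \<Rightarrow> 'a set \<Rightarrow> bool" where
  "type_c0l1 I F Q \<longleftrightarrow> (\<exists>a b. (\<forall>i\<in>I. \<forall>t\<in>Q. F i t = a i t + b i t) \<and>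
     (\<forall>t\<in>Q. c0_on I (\<lambda>i. a i t)) \<and>
     (\<exists>C. \<forall>i\<in>I. \<forall>T. finite T \<and> T \<subseteq> Q \<longrightarrow> (\<Sum>t\<in>T. \<bar>b i t\<bar>) \<le> C))"

end

theory Submission
  imports Defs
begin

text \<open>Fix a countable set D dense in H and, for e < d in D, a continuous cutoff equal to 1 up
  to e and to 0 from d on. By weak*-nullness only countably many indices i see a nonzero integral
  of one of these countably many cutoffs. At a point t of H that is not right-isolated, cutoffs
  with parameters in D converge pointwise to the indicator of [min K, t], so F_i(t) = 0 for all
  other indices. Hence, for t in Q, a failure of (F_i(t)) to be in c_0 forces b_{i,t} \<noteq> 0 for one
  of the countably many exceptional i, and each b_i has countable support by the l_1 bound.
  If H is convex, a right-isolated point t other than max H has an immediate successor in K, so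
  [min K, t] is clopen and F_i(t), the integral of its continuous indicator, tends to 0 directly.\<close>

lemma c0_on_mono:
  assumes "c0_on I g" and "\<And>i. i \<in> I \<Longrightarrow> \<bar>f i\<bar> \<le> \<bar>g i\<bar>"
  shows "c0_on I f"
  unfolding c0_on_def
proof (intro allI impI)
  fix \<epsilon> :: real assume "\<epsilon> > 0"
  then have "finite {i\<in>I. \<epsilon> \<le> \<bar>g i\<bar>}" using assms(1) by (simp add: c0_on_def)
  moreover have "{i\<in>I. \<epsilon> \<le> \<bar>f i\<bar>} \<subseteq> {i\<in>I. \<epsilon> \<le> \<bar>g i\<bar>}"
    using assms(2) by (auto intro: order_trans)
  ultimately show "finite {i\<in>I. \<epsilon> \<le> \<bar>f i\<bar>}"
    by (rule finite_subset[rotated])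
qed

lemma countable_nonzero_if_c0_on:
  assumes "c0_on I a"
  shows "countable {i\<in>I. a i \<noteq> 0}"
proof -
  have "{i\<in>I. a i \<noteq> 0} \<subseteq> (\<Union>n. {i\<in>I. inverse (real (Suc n)) \<le> \<bar>a i\<bar>})"
  proof
    fix i assume i: "i \<in> {i\<in>I. a i \<noteq> 0}"
    then obtain n where "inverse (real (Suc n)) < \<bar>a i\<bar>"
      using reals_Archimedean[of "\<bar>a i\<bar>"] by auto
    with i show "i \<in> (\<Union>n. {i\<in>I. inverse (real (Suc n)) \<le> \<bar>a i\<bar>})"
      by (blast intro: less_imp_le)
  qed
  moreover have "finite {i\<in>I. inverse (real (Suc n)) \<le> \<bar>a i\<bar>}" for n
    using assms by (simp add: c0_on_def)
  ultimately show ?thesis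
    by (meson countable_UN countable_finite countableI_type countable_subset)
qed

lemma c0_on_if_sum_bounded:
  assumes "\<And>T. finite T \<Longrightarrow> T \<subseteq> Q \<Longrightarrow> (\<Sum>t\<in>T. \<bar>b t\<bar>) \<le> C"
  shows "c0_on Q b"
  unfolding c0_on_def
proof (intro allI impI)
  fix \<epsilon> :: real
  assume "\<epsilon> > 0"
  show "finite {t\<in>Q. \<epsilon> \<le> \<bar>b t\<bar>}"
  proof (rule ccontr)
    assume "infinite {t\<in>Q. \<epsilon> \<le> \<bar>b t\<bar>}"
    then obtain T where T: "finite T" "card T = nat \<lceil>C / \<epsilon>\<rceil> + 1" "T \<subseteq> {t\<in>Q. \<epsilon> \<le> \<bar>b t\<bar>}"
      using infinite_arbitrarily_large by blast
    have "real (card T) * \<epsilon> \<le> (\<Sum>t\<in>T. \<bar>b t\<bar>)"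
      using sum_bounded_below[of T \<epsilon> "\<lambda>t. \<bar>b t\<bar>"] T(3) by auto
    also have "\<dots> \<le> C"
      using assms T by auto
    finally have "real (card T) \<le> C / \<epsilon>"
      using \<open>\<epsilon> > 0\<close> by (simp add: field_simps)
    with T(2) show False
      by linarith
  qed
qed

lemma finite_radon_finite_measure:
  assumes "finite_radon M"
  shows "finite_measure M"
proof (rule finite_measureI)
  have "space M = UNIV"
    using assms sets_eq_imp_space_eq[of M borel] by (simp add: finite_radon_def)
  moreover have "emeasure M UNIV < \<infinity>"
    using assms unfolding finite_radon_def by blast
  ultimately show "emeasure M (space M) \<noteq> \<infinity>"
    by simp
qed

lemma associated_measure_eq_integral_indicator:
  assumes "associated_measure F Mp Mm"
  shows "F t = integral\<^sup>L Mp (indicator {..t}) - integral\<^sup>L Mm (indicator {..t})"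
proof -
  interpret p: finite_measure Mp
    using assms finite_radon_finite_measure by (auto simp: associated_measure_def)
  interpret m: finite_measure Mm
    using assms finite_radon_finite_measure by (auto simp: associated_measure_def)
  show ?thesis
    using assms by (simp add: associated_measure_def finite_radon_def
        p.emeasure_eq_measure m.emeasure_eq_measure)
qed

lemma finite_radon_integral_tendsto:
  fixes s :: "nat \<Rightarrow> 'a::topological_space \<Rightarrow> real"
  assumes "finite_radon M" and "\<And>n. continuous_on UNIV (s n)" and "\<And>n x. \<bar>s n x\<bar> \<le> B"
    and "g \<in> borel_measurable borel" and "\<And>x. (\<lambda>n. s n x) \<longlonglongrightarrow> g x"
  shows "(\<lambda>n. integral\<^sup>L M (s n)) \<longlonglongrightarrow> integral\<^sup>L M g"
proof (rule integral_dominated_convergence[where w="\<lambda>_. B"])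
  interpret finite_measure M
    using assms(1) by (rule finite_radon_finite_measure)
  have sets: "sets M = sets borel"
    using assms(1) by (simp add: finite_radon_def)
  show "g \<in> borel_measurable M"
    using assms(4) measurable_cong_sets[OF sets refl] by blast
  show "s n \<in> borel_measurable M" for n
    using borel_measurable_continuous_onI[OF assms(2)] measurable_cong_sets[OF sets refl] by blast
  show "integrable M (\<lambda>_. B)" by simp
  show "AE x in M. (\<lambda>n. s n x) \<longlonglongrightarrow> g x" using assms(5) by simp
  show "AE x in M. norm (s n x) \<le> B" for n using assms(3) by simp
qed

lemma continuous_on_indicator_clopen:
  assumes "open A" and "closed A"
  shows "continuous_on UNIV (indicator A :: 'a::topological_space \<Rightarrow> real)"
proof -
  have "continuous_on (A \<union> - A) (\<lambda>x. if x \<in> A then 1 else (0::real))"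
    using assms by (intro continuous_on_cases) (auto simp: closed_Compl)
  then show ?thesis
    by (simp add: indicator_def of_bool_def)
qed

lemma compact_line_Urysohn:
  fixes e d :: "'a::linorder_topology"
  assumes "compact (UNIV :: 'a set)" and "e < d"
  shows "\<exists>f :: 'a \<Rightarrow> real. continuous_on UNIV f \<and> (\<forall>x\<le>e. f x = 1) \<and> (\<forall>x\<ge>d. f x = 0)
           \<and> (\<forall>x. \<bar>f x\<bar> \<le> 1)"
proof -
  have "Hausdorff_space (euclidean :: 'a topology)"
    unfolding Hausdorff_space_def by (metis hausdorff disjnt_def open_openin topspace_euclidean)
  moreover have "compact_space (euclidean :: 'a topology)"
    using assms(1) by (simp add: compact_space_def compactin_euclidean_iff)
  ultimately have "normal_space (euclidean :: 'a topology)"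
    using compact_Hausdorff_or_regular_imp_normal_space by blast
  moreover have "disjnt {d..} {..e}"
    using assms(2) by (auto simp: disjnt_def)
  ultimately obtain f where f: "continuous_map euclidean (top_of_set {0..1}) f"
      "f ` {d..} \<subseteq> {0}" "f ` {..e} \<subseteq> {1::real}"
    using Urysohn_lemma[of euclidean "{d..}" "{..e}" 0 1] by auto
  then have "continuous_on UNIV f"
    by (metis continuous_map_in_subtopology continuous_map_iff_continuous2 open_UNIV subtopology_UNIV)
  moreover have "\<bar>f x\<bar> \<le> 1" for x
    using f(1) by (force simp: continuous_map_in_subtopology Pi_iff)
  ultimately show ?thesis
    using f(2,3) by blast
qed

definition cutoff :: "'a::linorder_topology \<Rightarrow> 'a \<Rightarrow> 'a \<Rightarrow> real" where
  "cutoff e d = (SOME f. continuous_on UNIV f \<and> (\<forall>x\<le>e. f x = 1) \<and> (\<forall>x\<ge>d. f x = 0)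
                   \<and> (\<forall>x. \<bar>f x\<bar> \<le> 1))"

lemma cutoff:
  fixes e d :: "'a::linorder_topology"
  assumes "compact (UNIV :: 'a set)" and "e < d"
  shows continuous_on_cutoff: "continuous_on UNIV (cutoff e d)"
    and cutoff_eq_1: "\<And>x. x \<le> e \<Longrightarrow> cutoff e d x = 1"
    and cutoff_eq_0: "\<And>x. d \<le> x \<Longrightarrow> cutoff e d x = 0"
    and abs_cutoff_le_1: "\<And>x. \<bar>cutoff e d x\<bar> \<le> 1"
  using someI_ex[OF compact_line_Urysohn[OF assms]] unfolding cutoff_def by blast+

lemma countable_right_dense_sequence:
  fixes t :: "'a::linorder"
  assumes "countable D" and "\<exists>d\<in>D. t < d" and "\<And>x. t < x \<Longrightarrow> \<exists>d\<in>D. t < d \<and> d < x"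
  obtains d :: "nat \<Rightarrow> 'a" where "\<And>n. d n \<in> D" "\<And>n. t < d n"
    "\<And>x. t < x \<Longrightarrow> eventually (\<lambda>n. d n < x) sequentially"
proof
  define S where "S = D \<inter> {t<..}"
  have "S \<noteq> {}" and "countable S"
    using assms(1,2) by (auto simp: S_def)
  define d where "d n = Min (from_nat_into S ` {..n})" for n
  have "d n \<in> from_nat_into S ` {..n}" for n
    unfolding d_def by (rule Min_in) auto
  then have "d n \<in> S" for n
    using from_nat_into[OF \<open>S \<noteq> {}\<close>] by (metis imageE)
  then show "d n \<in> D" and "t < d n" for n
    by (auto simp: S_def)
  fix x assume "t < x"
  then obtain y where "y \<in> S" "y < x"
    using assms(3) by (auto simp: S_def)
  then obtain k where "from_nat_into S k = y"
    using from_nat_into_surj[OF \<open>countable S\<close>] by blast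
  then have "d n \<le> y" if "k \<le> n" for n
    unfolding d_def using that by (intro Min_le) auto
  with \<open>y < x\<close> show "eventually (\<lambda>n. d n < x) sequentially"
    by (auto intro: eventually_sequentiallyI[of k] le_less_trans)
qed

lemma associated_measure_eq_0_if_cutoffs_vanish:
  fixes t :: "'a::linorder_topology"
  assumes "compact (UNIV :: 'a set)" and F: "associated_measure F Mp Mm"
    and D: "countable D" "\<exists>d\<in>D. t < d" "\<And>x. t < x \<Longrightarrow> \<exists>d\<in>D. t < d \<and> d < x"
    and vanish: "\<And>e d. e \<in> D \<Longrightarrow> d \<in> D \<Longrightarrow> e < d \<Longrightarrow>
                   integral\<^sup>L Mp (cutoff e d) = integral\<^sup>L Mm (cutoff e d)"
  shows "F t = 0"
proof -
  obtain d where d: "\<And>n. d n \<in> D" "\<And>n. t < d n"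
      "\<And>x. t < x \<Longrightarrow> eventually (\<lambda>n. d n < x) sequentially"
    using countable_right_dense_sequence[OF D] by blast
  obtain e where e: "\<And>n. e n \<in> D" "\<And>n. t < e n" "\<And>n. e n < d n"
    using D(3)[OF d(2)] by metis
  define s where "s n = cutoff (e n) (d n)" for n
  have s_tendsto: "(\<lambda>n. s n x) \<longlonglongrightarrow> indicator {..t} x" for x
  proof (cases "x \<le> t")
    case True
    then show ?thesis
      using cutoff_eq_1[OF assms(1) e(3)] e(2) by (simp add: s_def less_imp_le order_trans)
  next
    case False
    then have "eventually (\<lambda>n. d n < x) sequentially"
      using d(3) by simp
    then have "eventually (\<lambda>n. s n x = 0) sequentially"
      by (rule eventually_mono) (simp add: s_def cutoff_eq_0[OF assms(1) e(3)])
    then show ?thesis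
      using False by (simp add: tendsto_eventually)
  qed
  have s_cont: "continuous_on UNIV (s n)" and s_bounded: "\<bar>s n x\<bar> \<le> 1" for n x
    unfolding s_def using continuous_on_cutoff abs_cutoff_le_1 assms(1) e(3) by blast+
  have integral_tendsto: "(\<lambda>n. integral\<^sup>L M (s n)) \<longlonglongrightarrow> integral\<^sup>L M (indicator {..t})"
    if "finite_radon M" for M :: "'a measure"
    by (intro finite_radon_integral_tendsto[where B=1, OF that] s_cont s_bounded s_tendsto) simp
  have "finite_radon Mp" and "finite_radon Mm"
    using F by (simp_all add: associated_measure_def)
  then have "(\<lambda>n. integral\<^sup>L Mp (s n) - integral\<^sup>L Mm (s n))
      \<longlonglongrightarrow> integral\<^sup>L Mp (indicator {..t}) - integral\<^sup>L Mm (indicator {..t})"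
    by (intro tendsto_diff integral_tendsto)
  moreover have "integral\<^sup>L Mp (s n) - integral\<^sup>L Mm (s n) = 0" for n
    using vanish e(1,3) d(1) by (simp add: s_def)
  ultimately have "(\<lambda>n. 0) \<longlonglongrightarrow> integral\<^sup>L Mp (indicator {..t}) - integral\<^sup>L Mm (indicator {..t} :: 'a \<Rightarrow> real)"
    by (simp only:)
  then show ?thesis
    unfolding associated_measure_eq_integral_indicator[OF F] LIMSEQ_const_iff by simp
qed

lemma right_dense_if_not_right_isolated:
  fixes H D :: "'a::linorder_topology set"
  assumes "compact H" and t: "t \<in> H - right_isolated H" and "H \<subseteq> closure D"
  shows "\<exists>d\<in>D. t < d" and "\<And>x. t < x \<Longrightarrow> \<exists>d\<in>D. t < d \<and> d < x"
proof -
  have above: "\<exists>s\<in>H. t < s" and no_successor: "\<And>s. s \<in> H \<Longrightarrow> t < s \<Longrightarrow> \<exists>u\<in>H. t < u \<and> u < s"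
    using t by (auto simp: right_isolated_def not_le)
  have between: "\<exists>u\<in>H. t < u \<and> u < x" if "t < x" for x
  proof (rule ccontr)
    assume none: "\<not> (\<exists>u\<in>H. t < u \<and> u < x)"
    have "compact (H \<inter> {x..})" and "H \<inter> {x..} \<noteq> {}"
      using assms(1) above none by (auto intro: compact_Int_closed simp: not_less)
    then obtain s where s: "s \<in> H \<inter> {x..}" "\<forall>y\<in>H \<inter> {x..}. s \<le> y"
      using compact_attains_inf by blast
    then obtain u where "u \<in> H" "t < u" "u < s"
      using no_successor \<open>t < x\<close> by force
    with s none show False
      by (meson IntI atLeast_iff leD not_le)
  qed
  show dense: "\<exists>d\<in>D. t < d \<and> d < x" if tx: "t < x" for x
  proof -
    obtain u where "u \<in> H" "t < u" "u < x"
      using between[OF tx] by blast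
    then have "D \<inter> {t<..<x} \<noteq> {}"
      using closure_iff_nhds_not_empty[of u D] \<open>H \<subseteq> closure D\<close>
      by (meson greaterThanLessThan_iff open_greaterThanLessThan order_refl subsetD)
    then show ?thesis
      by auto
  qed
  show "\<exists>d\<in>D. t < d"
    using above dense by blast
qed

lemma countable_not_c0_if_type_c0l1_vanishing_off_countable:
  assumes "type_c0l1 I F Q" and "countable J" and "\<And>i t. i \<in> I - J \<Longrightarrow> t \<in> S \<Longrightarrow> F i t = 0"
  shows "countable {t \<in> Q \<inter> S. \<not> c0_on I (\<lambda>i. F i t)}"
proof -
  obtain a b C where F: "\<forall>i\<in>I. \<forall>t\<in>Q. F i t = a i t + b i t"
    and a: "\<forall>t\<in>Q. c0_on I (\<lambda>i. a i t)"
    and b: "\<forall>i\<in>I. \<forall>T. finite T \<and> T \<subseteq> Q \<longrightarrow> (\<Sum>t\<in>T. \<bar>b i t\<bar>) \<le> C"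
    using assms(1) unfolding type_c0l1_def by (elim exE conjE) (rule that)
  have "\<exists>i\<in>I \<inter> J. b i t \<noteq> 0" if t: "t \<in> Q \<inter> S" "\<not> c0_on I (\<lambda>i. F i t)" for t
  proof (rule ccontr)
    assume no_b: "\<not> ?thesis"
    have "c0_on I (\<lambda>i. a i t)"
      using a t by blast
    moreover have "\<bar>F i t\<bar> \<le> \<bar>a i t\<bar>" if "i \<in> I" for i
    proof (cases "i \<in> J")
      case True
      then show ?thesis
        using that t F no_b by auto
    next
      case False
      then show ?thesis
        using that t assms(3) by simp
    qed
    ultimately have "c0_on I (\<lambda>i. F i t)"
      by (rule c0_on_mono)
    with t(2) show False ..

  qed
  then have "{t \<in> Q \<inter> S. \<not> c0_on I (\<lambda>i. F i t)} \<subseteq> (\<Union>i\<in>I \<inter> J. {t\<in>Q. b i t \<noteq> 0})"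
    by blast
  moreover have "countable (\<Union>i\<in>I \<inter> J. {t\<in>Q. b i t \<noteq> 0})"
  proof (rule countable_UN)
    show "countable (I \<inter> J)"
      using assms(2) by simp
    show "countable {t\<in>Q. b i t \<noteq> 0}" if "i \<in> I \<inter> J" for i
      using b that by (intro countable_nonzero_if_c0_on c0_on_if_sum_bounded) auto
  qed
  ultimately show ?thesis
    by (rule countable_subset)
qed

lemma countable_indices_cutoff_not_vanishing:
  fixes D :: "'a::linorder_topology set"
  assumes "compact (UNIV :: 'a set)" and "weak_star_null I F Mp Mm" and "countable D"
  shows "countable {i\<in>I. \<exists>e\<in>D. \<exists>d\<in>D. e < d \<and>
                      integral\<^sup>L (Mp i) (cutoff e d) \<noteq> integral\<^sup>L (Mm i) (cutoff e d)}"
proof -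
  let ?P = "{(e, d) \<in> D \<times> D. e < d}"
  have "countable {i\<in>I. integral\<^sup>L (Mp i) (cutoff e d) - integral\<^sup>L (Mm i) (cutoff e d) \<noteq> 0}"
    if "e < d" for e d
  proof (rule countable_nonzero_if_c0_on)
    show "c0_on I (\<lambda>i. integral\<^sup>L (Mp i) (cutoff e d) - integral\<^sup>L (Mm i) (cutoff e d))"
      using assms(2) continuous_on_cutoff[OF assms(1) that] unfolding weak_star_null_def by blast
  qed
  moreover have "countable ?P"
    using assms(3) by (intro countable_subset[of ?P "D \<times> D"]) auto
  ultimately have "countable (\<Union>(e, d)\<in>?P.
      {i\<in>I. integral\<^sup>L (Mp i) (cutoff e d) - integral\<^sup>L (Mm i) (cutoff e d) \<noteq> 0})"
    by (auto intro!: countable_UN)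
  then show ?thesis
    by (rule countable_subset[rotated]) auto
qed

lemma countable_not_c0_off_right_isolated:
  fixes H :: "'a::linorder_topology set"
  assumes "compact (UNIV :: 'a set)" and wsn: "weak_star_null I F Mp Mm" and "type_c0l1 I F Q"
    and "closed H" and "separable_space (subtopology euclidean H)"
  shows "countable {t \<in> Q \<inter> (H - right_isolated H). \<not> c0_on I (\<lambda>i. F i t)}"
proof -
  obtain D where D: "countable D" "H \<subseteq> closure D"
    using assms(5) unfolding separable_space_def
    by (auto simp: closure_of_subtopology euclidean_closure_of)
  define J where "J = {i\<in>I. \<exists>e\<in>D. \<exists>d\<in>D. e < d \<and>
                          integral\<^sup>L (Mp i) (cutoff e d) \<noteq> integral\<^sup>L (Mm i) (cutoff e d)}"
  have "compact H"
    using compact_Int_closed[OF assms(1,4)] by simp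
  have "F i t = 0" if i: "i \<in> I - J" and t: "t \<in> H - right_isolated H" for i t
  proof (rule associated_measure_eq_0_if_cutoffs_vanish[OF assms(1) _ D(1)])
    show "associated_measure (F i) (Mp i) (Mm i)"
      using wsn i by (simp add: weak_star_null_def)
    show "\<exists>d\<in>D. t < d" and "\<And>x. t < x \<Longrightarrow> \<exists>d\<in>D. t < d \<and> d < x"
      using right_dense_if_not_right_isolated[OF \<open>compact H\<close> t D(2)] by blast+
    show "\<And>e d. e \<in> D \<Longrightarrow> d \<in> D \<Longrightarrow> e < d \<Longrightarrow>
            integral\<^sup>L (Mp i) (cutoff e d) = integral\<^sup>L (Mm i) (cutoff e d)"
      using i by (auto simp: J_def)
  qed
  moreover have "countable J"
    unfolding J_def using countable_indices_cutoff_not_vanishing[OF assms(1) wsn D(1)] .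
  ultimately show ?thesis
    using countable_not_c0_if_type_c0l1_vanishing_off_countable[OF assms(3)] by blast
qed

lemma open_atMost_if_right_isolated_convex:
  fixes H :: "'a::linorder_topology set"
  assumes "order_convex H" and "t \<in> right_isolated H" and "\<not> (\<forall>s\<in>H. s \<le> t)"
  shows "open {..t}"
proof -
  obtain s where s: "s \<in> H" "t < s" "\<forall>u\<in>H. \<not> (t < u \<and> u < s)"
    using assms(2,3) by (auto simp: right_isolated_def)
  have "t \<in> H"
    using assms(2) by (simp add: right_isolated_def)
  with assms(1) s have "{t..s} \<subseteq> H"
    by (simp add: order_convex_def)
  with s have "\<not> (t < u \<and> u < s)" for u
    by (meson atLeastAtMost_iff less_imp_le subsetD)
  with s(2) have "{..t} = {..<s}"
    by (auto simp: not_less) (metis leD)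
  then show ?thesis
    by simp
qed

lemma c0_on_if_open_atMost:
  fixes t :: "'a::linorder_topology"
  assumes "weak_star_null I F Mp Mm" and "open {..t}"
  shows "c0_on I (\<lambda>i. F i t)"
proof (rule c0_on_mono)
  have "continuous_on UNIV (indicator {..t} :: 'a \<Rightarrow> real)"
    using assms(2) by (simp add: continuous_on_indicator_clopen)
  then show "c0_on I (\<lambda>i. integral\<^sup>L (Mp i) (indicator {..t}) - integral\<^sup>L (Mm i) (indicator {..t}))"
    using assms(1) unfolding weak_star_null_def by blast
  show "\<bar>F i t\<bar> \<le> \<bar>integral\<^sup>L (Mp i) (indicator {..t}) - integral\<^sup>L (Mm i) (indicator {..t})\<bar>"
    if "i \<in> I" for i
  proof -
    have "associated_measure (F i) (Mp i) (Mm i)"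
      using assms(1) that unfolding weak_star_null_def by blast
    then show ?thesis
      by (simp only: associated_measure_eq_integral_indicator order_refl)
  qed
qed

lemma finite_greatest_elements: "finite {t \<in> H. \<forall>s\<in>H. s \<le> (t :: 'a::linorder)}"
proof (rule finite_subset)
  show "{t \<in> H. \<forall>s\<in>H. s \<le> t} \<subseteq> {GREATEST t. t \<in> H}"
    by (auto intro: Greatest_equality[symmetric])
qed simp

theorem theorem3p2:
  fixes F :: "'i \<Rightarrow> 'a::linorder_topology \<Rightarrow> real"
    and Mp Mm :: "'i \<Rightarrow> 'a measure"
    and I :: "'i set" and Q :: "'a set"
  assumes "compact_line_type TYPE('a)"
    and "weak_star_null I F Mp Mm"
    and "type_c0l1 I F Q"
  shows "(\<forall>H. closed H \<and> separable_space (subtopology euclidean H) \<longrightarrow>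
            countable {t \<in> Q \<inter> (H - right_isolated H). \<not> c0_on I (\<lambda>i. F i t)})
       \<and> (\<forall>H. closed H \<and> separable_space (subtopology euclidean H) \<and> order_convex H \<longrightarrow>
            countable {t \<in> Q \<inter> H. \<not> c0_on I (\<lambda>i. F i t)})"
proof -
  have compact: "compact (UNIV :: 'a set)"
    using assms(1) by (simp add: compact_line_type_def)
  have off_right_isolated: "countable {t \<in> Q \<inter> (H - right_isolated H). \<not> c0_on I (\<lambda>i. F i t)}"
    if "closed H" and "separable_space (subtopology euclidean H)" for H
    using countable_not_c0_off_right_isolated[OF compact assms(2,3) that] .
  moreover have "countable {t \<in> Q \<inter> H. \<not> c0_on I (\<lambda>i. F i t)}"
    if "closed H" and "separable_space (subtopology euclidean H)" and "order_convex H" for H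
  proof -
    have "{t \<in> Q \<inter> H. \<not> c0_on I (\<lambda>i. F i t)} \<subseteq>
        {t \<in> Q \<inter> (H - right_isolated H). \<not> c0_on I (\<lambda>i. F i t)} \<union> {t \<in> H. \<forall>s\<in>H. s \<le> t}"
      using open_atMost_if_right_isolated_convex[OF that(3)] c0_on_if_open_atMost[OF assms(2)]
      by blast
    moreover have "countable {t \<in> H. \<forall>s\<in>H. s \<le> t}"
      using finite_greatest_elements by (rule countable_finite)
    ultimately show ?thesis
      using off_right_isolated[OF that(1,2)] by (meson countable_Un countable_subset)
  qed
  ultimately show ?thesis
    by blast
qed

end
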